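(* Let $P$, $T_\Sigma$, the lattice points $b_1,\dots,b_{p+3}$ and the coefficients $a_i(q)$ be as in the context. Let $b_{i_1},b_{i_2},b_{i_3}$ be the vertices of a triangle $\sigma$ of $T_\Sigma$, listed in counterclockwise order, and let $b_{i_4}$ be a lattice point of $P$ which is not a vertex of $\sigma$. Write $b_{i_4}=b_{i_3}+m'(b_{i_1}-b_{i_3})+n'(b_{i_2}-b_{i_3})$ with $m',n'\in\mathbb{Z}$. Then $$\frac{a_{i_4}(q)\,a_{i_3}(q)^{m'+n'-1}}{a_{i_1}(q)^{m'}\,a_{i_2}(q)^{n'}}$$ is a non-constant monomial of $q$.
   Context: Let $P\subset\mathbb{R}^2$ be a convex lattice polygon with a unimodular triangulation $T_\Sigma$ (every triangle of $T_\Sigma$ has lattice vertices and area $1/2$, and the vertex set of $T_\Sigma$ is $P\cap\mathbb{Z}^2$); this encodes a smooth toric Calabi–Yau 3-fold whose fan has rays generated by $(m,n,1)$, $(m,n)\in P\cap\mathbb{Z}^2$, and 3-cones over the triangles of $T_\Sigma$. Write $P\cap\mathbb{Z}^2=\{b_1,\dots,b_{p+3}\}$, $b_i=(m_i,n_i)$, with $b_1=(1,0)$, $b_2=(0,1)$, $b_3=(0,0)$, where $\sigma_1=\{b_1,b_2,b_3\}$ is a triangle of $T_\Sigma$. Let $L=\ker(\mathbb{Z}^{p+3}\to\mathbb{Z}^3,\ e_i\mapsto(m_i,n_i,1))$ and let $D_i\in L^\vee$ be the restriction of the $i$-th coordinate functional. For a triangle $\sigma$ of $T_\Sigma$ let $I'_\sigma$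 be the set of indices of its vertices; then $\{D_j:j\notin I'_\sigma\}$ is a basis of $L^\vee\otimes\mathbb{Q}$. Fix $H_1,\dots,H_p\in L^\vee\otimes\mathbb{Q}$ (nef classes) such that for every triangle $\sigma$, $H_k=\sum_{j\notin I'_\sigma}s^\sigma_{k,j}D_j$ with all $s^\sigma_{k,j}\in\mathbb{Z}_{\ge0}$ and the matrix $(s^\sigma_{k,j})$ nondegenerate. For $q\in(\mathbb{C}^* )^p$ put $a_i(q)=1$ for $i=1,2,3$ and $a_i(q)=\prod_{k=1}^p q_k^{s^{\sigma_1}_{k,i}}$ for $i\ge4$; the mirror curve is $\{H=0\}\subset(\mathbb{C}^* )^2$ with $H(X,Y,q)=\sum_{i=1}^{p+3}a_i(q)X^{m_i}Y^{n_i}$. A non-constant monomial of $q$ means $\prod_k q_k^{e_k}$ with $e_k\in\mathbb{Z}_{\ge0}$ not all zero. *)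

theory Defs
  imports "HOL-Analysis.Analysis"
begin

text \<open>Lattice points are indexed by 1..N with N = p+3; b i = (m_i, n_i).\<close>

definition rpt :: "int \<times> int \<Rightarrow> real \<times> real" where
  "rpt x = (real_of_int (fst x), real_of_int (snd x))"

definition det2 :: "int \<times> int \<Rightarrow> int \<times> int \<Rightarrow> int" where
  "det2 u v = fst u * snd v - snd u * fst v"

definition vsub :: "int \<times> int \<Rightarrow> int \<times> int \<Rightarrow> int \<times> int" where
  "vsub u v = (fst u - fst v, snd u - snd v)"

definition convex_lattice_polygon :: "(real \<times> real) set \<Rightarrow> bool" where
  "convex_lattice_polygon P \<longleftrightarrow>
     (\<exists>S :: (int \<times> int) set. finite S \<and> P = convex hull (rpt ` S)) \<and> interior P \<noteq> {}"

definition tri :: "(nat \<Rightarrow> int \<times> int) \<Rightarrow> nat set \<Rightarrow> (real \<times> real) set" where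
  "tri b \<sigma> = convex hull (rpt ` b ` \<sigma>)"

definition unimodular_triangulation ::
  "(real \<times> real) set \<Rightarrow> nat \<Rightarrow> (nat \<Rightarrow> int \<times> int) \<Rightarrow> nat set set \<Rightarrow> bool" where
  "unimodular_triangulation P N b T \<longleftrightarrow>
     finite T \<and>
     (\<forall>\<sigma>\<in>T. \<sigma> \<subseteq> {1..N} \<and> card \<sigma> = 3 \<and>
        (\<forall>i\<in>\<sigma>. \<forall>j\<in>\<sigma>. \<forall>k\<in>\<sigma>. i \<noteq> j \<and> j \<noteq> k \<and> i \<noteq> k \<longrightarrow>
            \<bar>det2 (vsub (b j) (b i)) (vsub (b k) (b i))\<bar> = 1)) \<and>
     \<Union>T = {1..N} \<and>
     (\<Union>\<sigma>\<in>T. tri b \<sigma>) = P \<and>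
     (\<forall>\<sigma>\<in>T. \<forall>\<tau>\<in>T. tri b \<sigma> \<inter> tri b \<tau> = tri b (\<sigma> \<inter> \<tau>))"

text \<open>The lattice L = ker(Z^N -> Z^3, e_i |-> (m_i, n_i, 1)), vectors supported on 1..N.\<close>
definition latL :: "nat \<Rightarrow> (nat \<Rightarrow> int \<times> int) \<Rightarrow> (nat \<Rightarrow> int) set" where
  "latL N b = {l. (\<forall>i. i \<notin> {1..N} \<longrightarrow> l i = 0) \<and>
       (\<Sum>i\<in>{1..N}. l i * fst (b i)) = 0 \<and>
       (\<Sum>i\<in>{1..N}. l i * snd (b i)) = 0 \<and>
       (\<Sum>i\<in>{1..N}. l i) = 0}"

text \<open>Element of L^dual (x) Q given by coefficients c: sum_i c_i D_i, as functional on L.\<close>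
definition Dcomb :: "nat \<Rightarrow> (nat \<Rightarrow> rat) \<Rightarrow> (nat \<Rightarrow> int) \<Rightarrow> rat" where
  "Dcomb N c l = (\<Sum>i\<in>{1..N}. c i * of_int (l i))"

text \<open>Admissible data: H k (k = 1..p) given by coefficient vectors (H_k = sum_i H k i D_i);
  for every triangle sigma, H_k = sum_{j not in sigma} s sigma k j D_j with s in Z_{>=0}
  (natural numbers) and the p x p matrix (s sigma k j)_{k in 1..p, j notin sigma} nondegenerate.\<close>
definition nef_data ::
  "nat \<Rightarrow> (nat \<Rightarrow> int \<times> int) \<Rightarrow> nat set set \<Rightarrow> (nat \<Rightarrow> nat \<Rightarrow> rat)
     \<Rightarrow> (nat set \<Rightarrow> nat \<Rightarrow> nat \<Rightarrow> nat) \<Rightarrow> bool" where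
  "nef_data p b T H s \<longleftrightarrow>
     (\<forall>\<sigma>\<in>T. \<forall>k\<in>{1..p}. \<forall>l\<in>latL (p+3) b.
        Dcomb (p+3) (H k) l =
        Dcomb (p+3) (\<lambda>j. if j \<in> \<sigma> then 0 else of_nat (s \<sigma> k j)) l) \<and>
     (\<forall>\<sigma>\<in>T. \<forall>c :: nat \<Rightarrow> rat.
        (\<forall>j\<in>{1..p+3} - \<sigma>. (\<Sum>k\<in>{1..p}. c k * of_nat (s \<sigma> k j)) = 0)
          \<longrightarrow> (\<forall>k\<in>{1..p}. c k = 0))"

text \<open>Mirror curve coefficients a_i(q), sigma_1 = {1,2,3}.\<close>
definition acoef :: "nat \<Rightarrow> (nat set \<Rightarrow> nat \<Rightarrow> nat \<Rightarrow> nat) \<Rightarrow> nat \<Rightarrow> (nat \<Rightarrow> complex) \<Rightarrow> complex" where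
  "acoef p s i q = (if i \<in> {1,2,3} then 1 else (\<Prod>k\<in>{1..p}. q k ^ s {1,2,3} k i))"

end

theory Submission
  imports Defs "Jordan_Normal_Form.Determinant"
begin

text \<open>The lifts (m_i, n_i, 1) of the four points satisfy the integral relation
  e(i4) + (m' + n' - 1) e(i3) - m' e(i1) - n' e(i2) = 0, i.e. they give a vector l of L.
  Pairing H_k with l in the basis attached to the triangle {1,2,3} yields the exponent of q_k in
  the quotient; in the basis attached to sigma every term except the one at i4 vanishes, so this
  exponent equals s^sigma_{k,i4} >= 0. As the square matrix (s^sigma_{k,j}) is nondegenerate, its
  column i4 cannot vanish, hence the monomial is not constant.\<close>

lemma column_nonzero_if_rows_independent:
  fixes S :: "nat \<Rightarrow> nat \<Rightarrow> 'a::field"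
  assumes "finite X" and "card X = p" and "j' \<in> X"
    and rows_independent: "\<And>c. \<forall>j\<in>X. (\<Sum>k\<in>{1..p}. c k * S k j) = 0 \<Longrightarrow> \<forall>k\<in>{1..p}. c k = 0"
  shows "\<exists>k\<in>{1..p}. S k j' \<noteq> 0"
proof (rule ccontr)
  assume "\<not> ?thesis"
  then have column_zero: "S k j' = 0" if "k \<in> {1..p}" for k
    using that by auto
  define xs where "xs = sorted_list_of_set X"
  have len: "length xs = p" and set_xs: "set xs = X"
    using assms(1,2) by (auto simp: xs_def)
  obtain r where r: "r < p" "xs ! r = j'"
    using assms(3) set_xs len by (metis in_set_conv_nth)
  define A :: "'a mat" where "A = mat p p (\<lambda>(i, k). S (Suc k) (xs ! i))"
  have A: "A \<in> carrier_mat p p"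
    by (simp add: A_def)
  have "det A = 0"
    unfolding det_def
  proof (simp add: carrier_matD[OF A], intro sum.neutral ballI)
    fix \<pi> assume "\<pi> \<in> {\<pi>. \<pi> permutes {0..<p}}"
    then have "\<pi> r < p"
      using r by (auto dest: permutes_in_image)
    then have "A $$ (r, \<pi> r) = 0"
      using r column_zero by (simp add: A_def)
    then have "(\<Prod>i = 0..<p. A $$ (i, \<pi> i)) = 0"
      using r by (intro prod_zero) auto
    then show "of_int (sign \<pi>) * (\<Prod>i = 0..<p. A $$ (i, \<pi> i)) = 0"
      by simp
  qed
  then obtain v where v: "v \<in> carrier_vec p" "v \<noteq> 0\<^sub>v p" "A *\<^sub>v v = 0\<^sub>v p"
    using det_0_iff_vec_prod_zero[OF A] by auto
  define c where "c k = v $ (k - 1)" for k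
  have "\<forall>j\<in>X. (\<Sum>k\<in>{1..p}. c k * S k j) = 0"
  proof
    fix j assume "j \<in> X"
    then obtain i where i: "i < p" "xs ! i = j"
      using set_xs len by (metis in_set_conv_nth)
    have "(\<Sum>k\<in>{1..p}. c k * S k j) = (\<Sum>k<p. S (Suc k) j * v $ k)"
      by (simp add: sum.atLeast1_atMost_eq c_def mult.commute)
    also have "\<dots> = (A *\<^sub>v v) $ i"
      using v(1) i by (auto simp: A_def mult_mat_vec_def scalar_prod_def atLeast0LessThan
          intro!: sum.cong)
    also have "\<dots> = 0"
      using v(3) i by simp
    finally show "(\<Sum>k\<in>{1..p}. c k * S k j) = 0" .
  qed
  then have "c (Suc i) = 0" if "i < p" for i
    using rows_independent that by simp
  then have "v = 0\<^sub>v p"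
    using v(1) by (intro eq_vecI) (auto simp: c_def)
  with v(2) show False ..
qed

lemma power_int_prod:
  fixes f :: "'b \<Rightarrow> 'a::field"
  shows "(\<Prod>k\<in>K. f k) powi n = (\<Prod>k\<in>K. f k powi n)"
  by (induction K rule: infinite_finite_induct) (auto simp: power_int_mult_distrib)

lemma power_quotient_eq_power:
  fixes z :: "'a::field" and a1 a2 a3 a4 e :: nat and x y w :: int
  assumes "z \<noteq> 0" and exponent: "int a4 + x * int a3 - y * int a1 - w * int a2 = int e"
  shows "z ^ a4 * (z ^ a3) powi x / ((z ^ a1) powi y * (z ^ a2) powi w) = z ^ e"
proof -
  have "z ^ a4 * (z ^ a3) powi x / ((z ^ a1) powi y * (z ^ a2) powi w)
      = z powi int a4 * z powi (int a3 * x) / (z powi (int a1 * y) * z powi (int a2 * w))"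
    by (simp add: power_int_mult)
  also have "\<dots> = z powi (int a4 + x * int a3 - y * int a1 - w * int a2)"
    using assms(1) by (simp add: power_int_add power_int_diff mult.commute)
  also have "\<dots> = z ^ e"
    by (simp add: exponent)
  finally show ?thesis .
qed

lemma monomial_quotient_eq_monomial:
  fixes q :: "'b \<Rightarrow> 'a::field" and a1 a2 a3 a4 e :: "'b \<Rightarrow> nat" and x y w :: int
  assumes "\<And>k. k \<in> K \<Longrightarrow> q k \<noteq> 0"
    and "\<And>k. k \<in> K \<Longrightarrow> int (a4 k) + x * int (a3 k) - y * int (a1 k) - w * int (a2 k) = int (e k)"
  shows "(\<Prod>k\<in>K. q k ^ a4 k) * (\<Prod>k\<in>K. q k ^ a3 k) powi x
           / ((\<Prod>k\<in>K. q k ^ a1 k) powi y * (\<Prod>k\<in>K. q k ^ a2 k) powi w)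
         = (\<Prod>k\<in>K. q k ^ e k)"
proof -
  have "(\<Prod>k\<in>K. q k ^ a4 k) * (\<Prod>k\<in>K. q k ^ a3 k) powi x
          / ((\<Prod>k\<in>K. q k ^ a1 k) powi y * (\<Prod>k\<in>K. q k ^ a2 k) powi w)
      = (\<Prod>k\<in>K. q k ^ a4 k * (q k ^ a3 k) powi x / ((q k ^ a1 k) powi y * (q k ^ a2 k) powi w))"
    by (simp add: power_int_prod prod.distrib prod_dividef)
  also have "\<dots> = (\<Prod>k\<in>K. q k ^ e k)"
    using assms by (intro prod.cong refl power_quotient_eq_power) auto
  finally show ?thesis .
qed

definition relation_vector :: "nat \<Rightarrow> nat \<Rightarrow> nat \<Rightarrow> nat \<Rightarrow> int \<Rightarrow> int \<Rightarrow> nat \<Rightarrow> int" where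
  "relation_vector i1 i2 i3 i4 m n i =
     (if i = i4 then 1 else 0) + (if i = i3 then m + n - 1 else 0)
     - (if i = i1 then m else 0) - (if i = i2 then n else 0)"

lemma sum_relation_vector:
  fixes c :: "nat \<Rightarrow> 'a::comm_ring_1"
  assumes "finite A" and "{i1, i2, i3, i4} \<subseteq> A"
  shows "(\<Sum>i\<in>A. c i * of_int (relation_vector i1 i2 i3 i4 m n i))
       = c i4 + of_int (m + n - 1) * c i3 - of_int m * c i1 - of_int n * c i2"
proof -
  have "(\<Sum>i\<in>A. c i * of_int (relation_vector i1 i2 i3 i4 m n i))
      = (\<Sum>i\<in>A. (if i = i4 then c i else 0) + (if i = i3 then of_int (m + n - 1) * c i else 0)
            - (if i = i1 then of_int m * c i else 0) - (if i = i2 then of_int n * c i else 0))"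
    by (intro sum.cong) (auto simp: relation_vector_def algebra_simps)
  also have "\<dots> = c i4 + of_int (m + n - 1) * c i3 - of_int m * c i1 - of_int n * c i2"
    using assms by (simp add: sum.distrib sum_subtractf)
  finally show ?thesis .
qed

lemma Dcomb_relation_vector:
  assumes "{i1, i2, i3, i4} \<subseteq> {1..N}"
  shows "Dcomb N c (relation_vector i1 i2 i3 i4 m n)
       = c i4 + of_int (m + n - 1) * c i3 - of_int m * c i1 - of_int n * c i2"
  unfolding Dcomb_def using assms by (intro sum_relation_vector) auto

lemma relation_vector_in_latL:
  assumes "{i1, i2, i3, i4} \<subseteq> {1..N}"
    and b_i4: "b i4 = (fst (b i3) + m * (fst (b i1) - fst (b i3)) + n * (fst (b i2) - fst (b i3)),
                      snd (b i3) + m * (snd (b i1) - snd (b i3)) + n * (snd (b i2) - snd (b i3)))"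
  shows "relation_vector i1 i2 i3 i4 m n \<in> latL N b"
proof -
  let ?l = "relation_vector i1 i2 i3 i4 m n"
  have sum_l: "(\<Sum>i\<in>{1..N}. ?l i * f i) = f i4 + (m + n - 1) * f i3 - m * f i1 - n * f i2"
    for f :: "nat \<Rightarrow> int"
    using sum_relation_vector[OF _ assms(1), of f m n] by (simp add: mult.commute)
  have "(\<Sum>i\<in>{1..N}. ?l i * fst (b i)) = 0" "(\<Sum>i\<in>{1..N}. ?l i * snd (b i)) = 0"
    unfolding sum_l using b_i4 by (simp_all add: algebra_simps)
  moreover have "(\<Sum>i\<in>{1..N}. ?l i) = 0"
    using sum_l[of "\<lambda>_. 1"] by simp
  moreover have "?l i = 0" if "i \<notin> {1..N}" for i
    using that assms(1) by (auto simp: relation_vector_def)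
  ultimately show ?thesis
    unfolding latL_def by blast
qed

definition chart_exponent :: "(nat set \<Rightarrow> nat \<Rightarrow> nat \<Rightarrow> nat) \<Rightarrow> nat set \<Rightarrow> nat \<Rightarrow> nat \<Rightarrow> nat" where
  "chart_exponent s \<sigma> k j = (if j \<in> \<sigma> then 0 else s \<sigma> k j)"

lemma acoef_eq_monomial:
  "acoef p s i q = (\<Prod>k\<in>{1..p}. q k ^ chart_exponent s {1, 2, 3} k i)"
  by (simp add: acoef_def chart_exponent_def)

lemma Dcomb_chart_exponent_eq:
  assumes "nef_data p b T H s" and "\<sigma> \<in> T" and "\<tau> \<in> T" and "k \<in> {1..p}"
    and "l \<in> latL (p + 3) b"
  shows "Dcomb (p + 3) (\<lambda>j. of_nat (chart_exponent s \<sigma> k j)) l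
       = Dcomb (p + 3) (\<lambda>j. of_nat (chart_exponent s \<tau> k j)) l"
proof -
  have "Dcomb (p + 3) (\<lambda>j. of_nat (chart_exponent s \<rho> k j)) l = Dcomb (p + 3) (H k) l"
    if "\<rho> \<in> T" for \<rho>
    using assms(1,4,5) that unfolding nef_data_def chart_exponent_def
    by (simp add: if_distrib cong: if_cong)
  with assms(2,3) show ?thesis
    by simp
qed

lemma nef_exponent_relation:
  assumes nef: "nef_data p b T H s" and "{i1, i2, i3} \<in> T" and "\<tau> \<in> T" and "k \<in> {1..p}"
    and "{i1, i2, i3, i4} \<subseteq> {1..p + 3}" and "i4 \<notin> {i1, i2, i3}"
    and b_i4: "b i4 = (fst (b i3) + m * (fst (b i1) - fst (b i3)) + n * (fst (b i2) - fst (b i3)),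
                      snd (b i3) + m * (snd (b i1) - snd (b i3)) + n * (snd (b i2) - snd (b i3)))"
  shows "int (chart_exponent s \<tau> k i4) + (m + n - 1) * int (chart_exponent s \<tau> k i3)
           - m * int (chart_exponent s \<tau> k i1) - n * int (chart_exponent s \<tau> k i2)
         = int (s {i1, i2, i3} k i4)"
proof -
  let ?l = "relation_vector i1 i2 i3 i4 m n"
  have "Dcomb (p + 3) (\<lambda>j. of_nat (chart_exponent s \<tau> k j)) ?l
      = Dcomb (p + 3) (\<lambda>j. of_nat (chart_exponent s {i1, i2, i3} k j)) ?l"
    using Dcomb_chart_exponent_eq[OF nef assms(3,2,4) relation_vector_in_latL[OF assms(5) b_i4]] .
  then have "(of_int (int (chart_exponent s \<tau> k i4) + (m + n - 1) * int (chart_exponent s \<tau> k i3)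
           - m * int (chart_exponent s \<tau> k i1) - n * int (chart_exponent s \<tau> k i2)) :: rat)
         = of_int (int (s {i1, i2, i3} k i4))"
    unfolding Dcomb_relation_vector[OF assms(5)] using assms(6)
    by (simp add: chart_exponent_def[of s "{i1, i2, i3}"])
  then show ?thesis
    by (simp only: of_int_eq_iff)
qed

lemma nef_data_column_nonzero:
  assumes nef: "nef_data p b T H s" and "\<sigma> \<in> T" and "\<sigma> \<subseteq> {1..p + 3}" and "card \<sigma> = 3"
    and "j \<in> {1..p + 3} - \<sigma>"
  shows "\<exists>k\<in>{1..p}. s \<sigma> k j \<noteq> 0"
proof -
  have "\<exists>k\<in>{1..p}. (of_nat (s \<sigma> k j) :: rat) \<noteq> 0"
  proof (rule column_nonzero_if_rows_independent[where X = "{1..p + 3} - \<sigma>" and j' = j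
        and S = "\<lambda>k j. of_nat (s \<sigma> k j)"])
    show "card ({1..p + 3} - \<sigma>) = p"
      using assms(3,4) by (simp add: card_Diff_subset finite_subset)
    show "\<forall>k\<in>{1..p}. c k = 0"
      if "\<forall>j\<in>{1..p + 3} - \<sigma>. (\<Sum>k\<in>{1..p}. c k * of_nat (s \<sigma> k j)) = 0"
      for c :: "nat \<Rightarrow> rat"
      using nef assms(2) that unfolding nef_data_def by blast
  qed (use assms(5) in auto)
  then show ?thesis
    by auto
qed

theorem proposition2p5p4:
  fixes p :: nat and b :: "nat \<Rightarrow> int \<times> int" and P :: "(real \<times> real) set"
    and T :: "nat set set" and H :: "nat \<Rightarrow> nat \<Rightarrow> rat"
    and s :: "nat set \<Rightarrow> nat \<Rightarrow> nat \<Rightarrow> nat"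
    and i1 i2 i3 i4 :: nat and m' n' :: int
  assumes P: "convex_lattice_polygon P"
    and b_inj: "inj_on b {1..p+3}"
    and b_lattice: "{x :: int \<times> int. rpt x \<in> P} = b ` {1..p+3}"
    and b1: "b 1 = (1, 0)" and b2: "b 2 = (0, 1)" and b3: "b 3 = (0, 0)"
    and T: "unimodular_triangulation P (p+3) b T"
    and sigma1: "{1, 2, 3} \<in> T"
    and nef: "nef_data p b T H s"
    and sigma: "{i1, i2, i3} \<in> T" and distinct: "i1 \<noteq> i2" "i2 \<noteq> i3" "i1 \<noteq> i3"
    and ccw: "det2 (vsub (b i2) (b i1)) (vsub (b i3) (b i1)) > 0"
    and i4: "i4 \<in> {1..p+3}" "i4 \<notin> {i1, i2, i3}"
    and mn: "b i4 = (fst (b i3) + m' * (fst (b i1) - fst (b i3)) + n' * (fst (b i2) - fst (b i3)),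
                     snd (b i3) + m' * (snd (b i1) - snd (b i3)) + n' * (snd (b i2) - snd (b i3)))"
  shows "\<exists>e :: nat \<Rightarrow> nat. (\<exists>k\<in>{1..p}. e k \<noteq> 0) \<and>
           (\<forall>q :: nat \<Rightarrow> complex. (\<forall>k\<in>{1..p}. q k \<noteq> 0) \<longrightarrow>
              acoef p s i4 q * acoef p s i3 q powi (m' + n' - 1)
                / (acoef p s i1 q powi m' * acoef p s i2 q powi n')
              = (\<Prod>k\<in>{1..p}. q k ^ e k))"
proof -
  let ?\<sigma> = "{i1, i2, i3}"
  have \<sigma>_sub: "?\<sigma> \<subseteq> {1..p+3}" and card_\<sigma>: "card ?\<sigma> = 3"
    using T sigma unfolding unimodular_triangulation_def by auto
  have exponent: "int (chart_exponent s {1, 2, 3} k i4)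
      + (m' + n' - 1) * int (chart_exponent s {1, 2, 3} k i3)
      - m' * int (chart_exponent s {1, 2, 3} k i1) - n' * int (chart_exponent s {1, 2, 3} k i2)
      = int (s ?\<sigma> k i4)" if "k \<in> {1..p}" for k
    using nef_exponent_relation[OF nef sigma sigma1 that _ i4(2) mn] \<sigma>_sub i4(1) by blast
  have "\<exists>k\<in>{1..p}. s ?\<sigma> k i4 \<noteq> 0"
    using nef_data_column_nonzero[OF nef sigma \<sigma>_sub card_\<sigma>] i4 by blast
  moreover have "acoef p s i4 q * acoef p s i3 q powi (m' + n' - 1)
      / (acoef p s i1 q powi m' * acoef p s i2 q powi n') = (\<Prod>k\<in>{1..p}. q k ^ s ?\<sigma> k i4)"
    if "\<forall>k\<in>{1..p}. q k \<noteq> 0" for q :: "nat \<Rightarrow> complex"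
    unfolding acoef_eq_monomial
    by (rule monomial_quotient_eq_monomial) (use that exponent in blast)+
  ultimately show ?thesis
    by (intro exI[of _ "\<lambda>k. s ?\<sigma> k i4"]) blast
qed

end
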